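(* Let $(\mathfrak{S},\mathfrak{C})$ be a binary system with a finite simple set of connections $\mathfrak{C}=\{\{A_i,B_i\}:i\in\{1,\ldots,n\}\}$. Then the value $\Delta_{\min}(\mathfrak{S},\mathfrak{C})$ is achieved in some coupling $S$ of $\mathfrak{S}$, and $\Delta_{\min}(\mathfrak{S},\mathfrak{C})\ge\Delta_0(\mathfrak{C})$. The system has a (maximally) noncontextual description if and only if $\Delta_{\min}(\mathfrak{S},\mathfrak{C})=\Delta_0(\mathfrak{C})$.
   Context: A random bunch is a family of jointly distributed random variables. A binary system $(\mathfrak{S},\mathfrak{C})$ consists of a set $\mathfrak{S}$ of random bunches whose components are all $\pm1$-valued, pairwise componentwise stochastically unrelated (no component of one bunch is jointly distributed with a component of another), and a simple set $\mathfrak{C}$ of connections: pairwise disjoint pairs $\{A,B\}$ with $A$, $B$ components of two distinct bunches of $\mathfrak{S}$. A coupling of random variables (or bunches) $X,Y,\ldots$ is a jointly distributed family $(X^*,Y^*,\ldots)$ with $X^*$ distributed as $X$, $Y^*$ as $Y$, etc.; a coupling $S$ of $\mathfrak{S}$ is a coupling of all bunches in $\mathfrak{S}$; in it each connection $\{A_i,B_i\}$ is represented by the jointly distributed pair $(A_i^*,B_i^* )$. A coupling $(A^*,B^* )$ of $A,B$ is maximal if $\Pr[A^*=B^*]\ge\Pr[A^{**}=B^{**}]$ for every coupling $(A^{**},B^{**})$ of $A,B$. The system has a (maximally) noncontextual description if there is a coupling $S$ of $\mathfrak{S}$ in which every pair $(A_i^*,B_i^* )$ is a maximal coupling of $A_i,B_i$;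 otherwise it is contextual. $\Delta_0(\mathfrak{C})=\frac12\sum_{i=1}^n|\langle A_i\rangle-\langle B_i\rangle|$, with $\langle\cdot\rangle$ the expectation, and $\Delta_{\min}(\mathfrak{S},\mathfrak{C})$ is the infimum of $\sum_{i=1}^n\Pr[A_i^*\ne B_i^*]$ over all couplings $S$ of $\mathfrak{S}$. *)

theory Defs
  imports "HOL-Probability.Probability"
begin

text \<open>Bunches are labelled by elements of a set Bs (type 'b);
bunch b has component labels cmp b (type 'c); a component of the system is
the pair (b, c) with c in cmp b.  A random bunch is given by its joint
distribution P b, a probability measure on the space of +-1-valued
assignments to its components (distinct bunches are stochastically unrelated:
each has its own distribution and nothing is jointly distributed across them).\<close>

definition pm_space :: "'i set \<Rightarrow> ('i \<Rightarrow> int) measure" where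
  "pm_space I = PiM I (\<lambda>_. count_space {-1, 1})"

definition binary_system ::
  "'b set \<Rightarrow> ('b \<Rightarrow> 'c set) \<Rightarrow> ('b \<Rightarrow> ('c \<Rightarrow> int) measure)
   \<Rightarrow> (nat \<Rightarrow> 'b \<times> 'c) \<Rightarrow> (nat \<Rightarrow> 'b \<times> 'c) \<Rightarrow> nat \<Rightarrow> bool" where
  "binary_system Bs cmp P A B n \<longleftrightarrow>
     (\<forall>b\<in>Bs. prob_space (P b) \<and> sets (P b) = sets (pm_space (cmp b))) \<and>
     (\<forall>i<n. A i \<in> Sigma Bs cmp \<and> B i \<in> Sigma Bs cmp \<and> fst (A i) \<noteq> fst (B i)) \<and>
     (\<forall>i<n. \<forall>j<n. i \<noteq> j \<longrightarrow> {A i, B i} \<inter> {A j, B j} = {})"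

definition is_coupling ::
  "'b set \<Rightarrow> ('b \<Rightarrow> 'c set) \<Rightarrow> ('b \<Rightarrow> ('c \<Rightarrow> int) measure) \<Rightarrow> ('b \<times> 'c \<Rightarrow> int) measure \<Rightarrow> bool" where
  "is_coupling Bs cmp P S \<longleftrightarrow>
     prob_space S \<and> sets S = sets (pm_space (Sigma Bs cmp)) \<and>
     (\<forall>b\<in>Bs. distr S (pm_space (cmp b)) (\<lambda>\<omega>. \<lambda>c\<in>cmp b. \<omega> (b, c)) = P b)"

definition comp_dist :: "('b \<Rightarrow> ('c \<Rightarrow> int) measure) \<Rightarrow> 'b \<times> 'c \<Rightarrow> int measure" where
  "comp_dist P x = distr (P (fst x)) (count_space {-1, 1}) (\<lambda>\<omega>. \<omega> (snd x))"

definition comp_expect :: "('b \<Rightarrow> ('c \<Rightarrow> int) measure) \<Rightarrow> 'b \<times> 'c \<Rightarrow> real" where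
  "comp_expect P x = (\<integral>\<omega>. real_of_int (\<omega> (snd x)) \<partial>(P (fst x)))"

definition pair_coupling :: "int measure \<Rightarrow> int measure \<Rightarrow> (int \<times> int) measure \<Rightarrow> bool" where
  "pair_coupling mA mB Q \<longleftrightarrow>
     prob_space Q \<and> sets Q = sets (count_space ({-1, 1} \<times> {-1, 1})) \<and>
     distr Q (count_space {-1, 1}) fst = mA \<and> distr Q (count_space {-1, 1}) snd = mB"

definition maximal_coupling :: "int measure \<Rightarrow> int measure \<Rightarrow> (int \<times> int) measure \<Rightarrow> bool" where
  "maximal_coupling mA mB Q \<longleftrightarrow>
     pair_coupling mA mB Q \<and>
     (\<forall>Q'. pair_coupling mA mB Q' \<longrightarrow>
        measure Q' {p \<in> space Q'. fst p = snd p} \<le> measure Q {p \<in> space Q. fst p = snd p})"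

definition pair_dist :: "('b \<times> 'c \<Rightarrow> int) measure \<Rightarrow> 'b \<times> 'c \<Rightarrow> 'b \<times> 'c \<Rightarrow> (int \<times> int) measure" where
  "pair_dist S a b = distr S (count_space ({-1, 1} \<times> {-1, 1})) (\<lambda>\<omega>. (\<omega> a, \<omega> b))"

definition noncontextual ::
  "'b set \<Rightarrow> ('b \<Rightarrow> 'c set) \<Rightarrow> ('b \<Rightarrow> ('c \<Rightarrow> int) measure)
   \<Rightarrow> (nat \<Rightarrow> 'b \<times> 'c) \<Rightarrow> (nat \<Rightarrow> 'b \<times> 'c) \<Rightarrow> nat \<Rightarrow> bool" where
  "noncontextual Bs cmp P A B n \<longleftrightarrow>
     (\<exists>S. is_coupling Bs cmp P S \<and>
        (\<forall>i<n. maximal_coupling (comp_dist P (A i)) (comp_dist P (B i)) (pair_dist S (A i) (B i))))"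

definition mismatch :: "('b \<times> 'c \<Rightarrow> int) measure \<Rightarrow> (nat \<Rightarrow> 'b \<times> 'c) \<Rightarrow> (nat \<Rightarrow> 'b \<times> 'c) \<Rightarrow> nat \<Rightarrow> real" where
  "mismatch S A B n = (\<Sum>i<n. measure S {\<omega> \<in> space S. \<omega> (A i) \<noteq> \<omega> (B i)})"

definition Delta_min ::
  "'b set \<Rightarrow> ('b \<Rightarrow> 'c set) \<Rightarrow> ('b \<Rightarrow> ('c \<Rightarrow> int) measure)
   \<Rightarrow> (nat \<Rightarrow> 'b \<times> 'c) \<Rightarrow> (nat \<Rightarrow> 'b \<times> 'c) \<Rightarrow> nat \<Rightarrow> real" where
  "Delta_min Bs cmp P A B n = (INF S \<in> {S. is_coupling Bs cmp P S}. mismatch S A B n)"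

definition Delta0 :: "('b \<Rightarrow> ('c \<Rightarrow> int) measure) \<Rightarrow> (nat \<Rightarrow> 'b \<times> 'c) \<Rightarrow> (nat \<Rightarrow> 'b \<times> 'c) \<Rightarrow> nat \<Rightarrow> real" where
  "Delta0 P A B n = (1/2) * (\<Sum>i<n. \<bar>comp_expect P (A i) - comp_expect P (B i)\<bar>)"

end

theory Submission
  imports Defs
begin

text \<open>Only the finitely many components K that occur in connections matter.  A coupling S
induces a distribution q of its K-part on {-1,1}^K; q is consistent with the marginal of every
bunch, and the mismatch of S is a linear function of q.  Conversely every consistent q comes
from a coupling: reweight the independent product of all bunches by q v / p v on the event that
the K-part equals v, where p v is the probability of that event.  The consistent q form a compact
set, so the minimal mismatch is attained.

For a single connection, \<bar>Pr[A = 1] - Pr[B = 1]\<bar> \<le> Pr[A \<noteq> B], and a coupling is maximal exactly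
when equality holds (the coupling putting mass min Pr[A = 1] Pr[B = 1] on (1, 1) attains it).
As Delta0 is the sum of these gaps, Delta_min \<ge> Delta0, with equality iff some coupling makes
every connection maximal.\<close>

subsection \<open>Couplings of two \<open>\<plusminus>1\<close>-valued random variables\<close>

lemma pm1_measure_eqI:
  assumes pM: "prob_space M" and pN: "prob_space N"
    and sM: "sets M = sets (count_space {-1,1::int})"
    and sN: "sets N = sets (count_space {-1,1::int})"
    and eq: "measure M {1} = measure N {1}"
  shows "M = N"
proof (rule measure_eqI)
  show "sets M = sets N" using sM sN by simp
  have spM: "space M = {-1,1}" using sets_eq_imp_space_eq[OF sM] by simp
  have spN: "space N = {-1,1}" using sets_eq_imp_space_eq[OF sN] by simp
  have compl: "{-1::int,1} - {1} = {-1}" by auto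
  have mM: "measure M {-1} = 1 - measure M {1}"
    using prob_space.prob_compl[OF pM, of "{1}"] sM spM compl by simp
  have mN: "measure N {-1} = 1 - measure N {1}"
    using prob_space.prob_compl[OF pN, of "{1}"] sN spN compl by simp
  fix X assume "X \<in> sets M"
  hence "X = {} \<or> X = {-1} \<or> X = {1} \<or> X = {-1,1}" using sM by auto
  hence "measure M X = measure N X"
    using eq mM mN prob_space.prob_space[OF pM] prob_space.prob_space[OF pN] spM spN by auto
  thus "emeasure M X = emeasure N X"
    using finite_measure.emeasure_eq_measure[OF prob_space.finite_measure[OF pM]]
      finite_measure.emeasure_eq_measure[OF prob_space.finite_measure[OF pN]] by simp
qed

lemma
  assumes "pair_coupling mA mB Q"
  shows pair_coupling_prob_space: "prob_space Q"
    and sets_pair_coupling: "sets Q = Pow (space Q)"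
  using assms sets_eq_imp_space_eq[of Q "count_space ({-1,1::int} \<times> {-1,1::int})"]
  by (auto simp: pair_coupling_def)

lemma pair_coupling_marginals:
  assumes "pair_coupling mA mB Q"
  shows "measure mA {1} = measure Q {p\<in>space Q. fst p = 1}"
    and "measure mB {1} = measure Q {p\<in>space Q. snd p = 1}"
proof -
  have sQ: "sets Q = sets (count_space ({-1,1::int} \<times> {-1,1::int}))"
    and dA: "distr Q (count_space {-1,1}) fst = mA" and dB: "distr Q (count_space {-1,1}) snd = mB"
    using assms unfolding pair_coupling_def by auto
  have mf: "fst \<in> measurable Q (count_space {-1,1::int})"
    and ms: "snd \<in> measurable Q (count_space {-1,1::int})"
    unfolding measurable_cong_sets[OF sQ refl] by (auto simp: Pi_iff)
  show "measure mA {1} = measure Q {p\<in>space Q. fst p = 1}"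
    using measure_distr[OF mf, of "{1}"] dA by (simp add: vimage_def Int_def conj_commute)
  show "measure mB {1} = measure Q {p\<in>space Q. snd p = 1}"
    using measure_distr[OF ms, of "{1}"] dB by (simp add: vimage_def Int_def conj_commute)
qed

lemma marginal_gap_le_pair_mismatch:
  assumes "pair_coupling mA mB Q"
  shows "\<bar>measure mA {1} - measure mB {1}\<bar> \<le> measure Q {p \<in> space Q. fst p \<noteq> snd p}"
proof -
  interpret Q: prob_space Q by (rule pair_coupling_prob_space[OF assms])
  note sQ = sets_pair_coupling[OF assms]
  let ?X = "{p\<in>space Q. fst p = 1}" and ?Y = "{p\<in>space Q. snd p = 1}"
    and ?D = "{p \<in> space Q. fst p \<noteq> snd p}"
  have "Q.prob ?X \<le> Q.prob (?Y \<union> ?D)" by (intro Q.finite_measure_mono) (auto simp: sQ)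
  also have "\<dots> \<le> Q.prob ?Y + Q.prob ?D" by (intro measure_subadditive) (auto simp: sQ)
  finally have 1: "Q.prob ?X \<le> Q.prob ?Y + Q.prob ?D" .
  have "Q.prob ?Y \<le> Q.prob (?X \<union> ?D)" by (intro Q.finite_measure_mono) (auto simp: sQ)
  also have "\<dots> \<le> Q.prob ?X + Q.prob ?D" by (intro measure_subadditive) (auto simp: sQ)
  finally have 2: "Q.prob ?Y \<le> Q.prob ?X + Q.prob ?D" .
  show ?thesis using 1 2 pair_coupling_marginals[OF assms] by linarith
qed

lemma pair_match_eq_1_minus_mismatch:
  assumes "pair_coupling mA mB Q"
  shows "measure Q {p \<in> space Q. fst p = snd p} = 1 - measure Q {p \<in> space Q. fst p \<noteq> snd p}"
proof -
  interpret Q: prob_space Q by (rule pair_coupling_prob_space[OF assms])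
  have "space Q - {p \<in> space Q. fst p \<noteq> snd p} = {p \<in> space Q. fst p = snd p}" by auto
  thus ?thesis
    using Q.prob_compl[of "{p \<in> space Q. fst p \<noteq> snd p}"] sets_pair_coupling[OF assms] by auto
qed

definition max_pair_weight :: "real \<Rightarrow> real \<Rightarrow> int \<times> int \<Rightarrow> real" where
  "max_pair_weight a b p = (if p = (1,1) then min a b else if p = (-1,-1) then min (1-a) (1-b)
     else if p = (1,-1) then a - min a b else b - min a b)"

definition max_pair_coupling :: "real \<Rightarrow> real \<Rightarrow> (int \<times> int) measure" where
  "max_pair_coupling a b = point_measure ({-1,1} \<times> {-1,1}) (\<lambda>p. ennreal (max_pair_weight a b p))"

context
  fixes a b :: real
  assumes a: "0 \<le> a" "a \<le> 1" and b: "0 \<le> b" "b \<le> 1"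
begin

lemma measure_max_pair_coupling:
  assumes "X \<subseteq> {-1,1} \<times> {-1,1}"
  shows "emeasure (max_pair_coupling a b) X = ennreal (sum (max_pair_weight a b) X)"
    and "measure (max_pair_coupling a b) X = sum (max_pair_weight a b) X"
proof -
  have nonneg: "0 \<le> max_pair_weight a b p" for p using a b by (auto simp: max_pair_weight_def)
  have "emeasure (max_pair_coupling a b) X = (\<Sum>p\<in>X. ennreal (max_pair_weight a b p))"
    unfolding max_pair_coupling_def using assms
    by (intro emeasure_point_measure_finite) (auto intro: finite_subset)
  thus "emeasure (max_pair_coupling a b) X = ennreal (sum (max_pair_weight a b) X)"
    using nonneg by (simp add: sum_ennreal)
  thus "measure (max_pair_coupling a b) X = sum (max_pair_weight a b) X"
    using nonneg by (simp add: measure_def sum_nonneg)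
qed

lemma space_max_pair_coupling: "space (max_pair_coupling a b) = {-1,1} \<times> {-1,1}"
  by (simp add: max_pair_coupling_def space_point_measure)

lemma sets_max_pair_coupling:
  "sets (max_pair_coupling a b) = sets (count_space ({-1,1} \<times> {-1,1}))"
  by (simp add: max_pair_coupling_def sets_point_measure)

lemma prob_space_max_pair_coupling: "prob_space (max_pair_coupling a b)"
proof (rule prob_spaceI)
  have "{-1,1::int} \<times> {-1,1::int} = {(1,1),(-1,-1),(1,-1),(-1,1)}" by auto
  thus "emeasure (max_pair_coupling a b) (space (max_pair_coupling a b)) = 1"
    by (simp add: space_max_pair_coupling measure_max_pair_coupling max_pair_weight_def)
qed

lemma max_pair_coupling_marginals:
  "measure (distr (max_pair_coupling a b) (count_space {-1,1}) fst) {1} = a"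
  "measure (distr (max_pair_coupling a b) (count_space {-1,1}) snd) {1} = b"
proof -
  have "fst \<in> measurable (max_pair_coupling a b) (count_space {-1,1::int})"
    and "snd \<in> measurable (max_pair_coupling a b) (count_space {-1,1::int})"
    unfolding measurable_cong_sets[OF sets_max_pair_coupling refl] by (auto simp: Pi_iff)
  moreover have "fst -` {1} \<inter> space (max_pair_coupling a b) = {(1,1),(1,-1)}"
    and "snd -` {1} \<inter> space (max_pair_coupling a b) = {(1,1),(-1,1)}"
    by (auto simp: space_max_pair_coupling)
  ultimately show "measure (distr (max_pair_coupling a b) (count_space {-1,1}) fst) {1} = a"
    and "measure (distr (max_pair_coupling a b) (count_space {-1,1}) snd) {1} = b"
    by (simp_all add: measure_distr measure_max_pair_coupling max_pair_weight_def)
qed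

lemma max_pair_coupling_mismatch:
  "measure (max_pair_coupling a b) {p \<in> space (max_pair_coupling a b). fst p \<noteq> snd p} = \<bar>a - b\<bar>"
proof -
  have "{p \<in> space (max_pair_coupling a b). fst p \<noteq> snd p} = {(1,-1),(-1,1)}"
    by (auto simp: space_max_pair_coupling)
  thus ?thesis by (simp add: measure_max_pair_coupling max_pair_weight_def)
qed

end

lemma pair_coupling_attaining_gap:
  assumes pA: "prob_space mA" "sets mA = sets (count_space {-1,1::int})"
    and pB: "prob_space mB" "sets mB = sets (count_space {-1,1::int})"
  obtains Q where "pair_coupling mA mB Q"
    "measure Q {p \<in> space Q. fst p \<noteq> snd p} = \<bar>measure mA {1} - measure mB {1}\<bar>"
proof -
  define a where "a = measure mA {1}"
  define b where "b = measure mB {1}"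
  have ab: "0 \<le> a" "a \<le> 1" "0 \<le> b" "b \<le> 1"
    using prob_space.prob_le_1[OF pA(1)] prob_space.prob_le_1[OF pB(1)] by (auto simp: a_def b_def)
  let ?Q = "max_pair_coupling a b"
  interpret Q: prob_space ?Q by (rule prob_space_max_pair_coupling[OF ab])
  have "fst \<in> measurable ?Q (count_space {-1,1::int})"
    and "snd \<in> measurable ?Q (count_space {-1,1::int})"
    unfolding measurable_cong_sets[OF sets_max_pair_coupling[OF ab] refl] by (auto simp: Pi_iff)
  hence "distr ?Q (count_space {-1,1}) fst = mA" "distr ?Q (count_space {-1,1}) snd = mB"
    using max_pair_coupling_marginals[OF ab] pA pB Q.prob_space_distr
    by (auto intro!: pm1_measure_eqI simp: a_def b_def)
  hence "pair_coupling mA mB ?Q"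
    unfolding pair_coupling_def using Q.prob_space_axioms sets_max_pair_coupling[OF ab] by simp
  thus ?thesis using that max_pair_coupling_mismatch[OF ab] by (simp add: a_def b_def)
qed

lemma maximal_coupling_iff_mismatch_eq_gap:
  assumes "prob_space mA" "sets mA = sets (count_space {-1,1::int})"
    and "prob_space mB" "sets mB = sets (count_space {-1,1::int})"
  shows "maximal_coupling mA mB Q \<longleftrightarrow> pair_coupling mA mB Q \<and>
      measure Q {p \<in> space Q. fst p \<noteq> snd p} = \<bar>measure mA {1} - measure mB {1}\<bar>"
proof -
  obtain Q' where Q': "pair_coupling mA mB Q'"
      "measure Q' {p \<in> space Q'. fst p \<noteq> snd p} = \<bar>measure mA {1} - measure mB {1}\<bar>"
    using pair_coupling_attaining_gap[OF assms] by blast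
  show ?thesis
  proof
    assume max: "maximal_coupling mA mB Q"
    hence pc: "pair_coupling mA mB Q" by (simp add: maximal_coupling_def)
    have "measure Q' {p \<in> space Q'. fst p = snd p} \<le> measure Q {p \<in> space Q. fst p = snd p}"
      using max Q'(1) by (simp add: maximal_coupling_def)
    thus "pair_coupling mA mB Q \<and>
        measure Q {p \<in> space Q. fst p \<noteq> snd p} = \<bar>measure mA {1} - measure mB {1}\<bar>"
      using pc Q' marginal_gap_le_pair_mismatch[OF pc]
        pair_match_eq_1_minus_mismatch[OF pc] pair_match_eq_1_minus_mismatch[OF Q'(1)] by linarith
  next
    assume "pair_coupling mA mB Q \<and>
        measure Q {p \<in> space Q. fst p \<noteq> snd p} = \<bar>measure mA {1} - measure mB {1}\<bar>"
    thus "maximal_coupling mA mB Q"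
      using marginal_gap_le_pair_mismatch[of mA mB] pair_match_eq_1_minus_mismatch[of mA mB]
      by (force simp: maximal_coupling_def)
  qed
qed

lemma space_pm_space: "space (pm_space I) = PiE I (\<lambda>_. {-1,1::int})"
  by (simp add: pm_space_def space_PiM)

lemma pm_space_cylinder_sets:
  assumes "finite J" "J \<subseteq> I"
  shows "{\<omega>\<in>space (pm_space I). \<forall>j\<in>J. \<omega> j = w j} \<in> sets (pm_space I)"
proof -
  have "{\<omega>\<in>space (pm_space I). \<forall>j\<in>J. \<omega> j = w j} =
     prod_emb I (\<lambda>_. count_space {-1,1::int}) J (PiE J (\<lambda>j. {w j} \<inter> {-1,1}))"
    using assms unfolding pm_space_def prod_emb_def
    by (auto simp: space_PiM PiE_iff extensional_def) (metis subsetD)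
  also have "\<dots> \<in> sets (pm_space I)" unfolding pm_space_def
    using assms by (intro sets_PiM_I) auto
  finally show ?thesis .
qed

lemma measurable_pm_component:
  assumes "sets M = sets (pm_space I)" "x \<in> I"
  shows "(\<lambda>\<omega>. \<omega> x) \<in> measurable M (count_space {-1,1::int})"
  unfolding measurable_cong_sets[OF assms(1) refl] pm_space_def
  using assms(2) by (rule measurable_component_singleton)

lemma measurable_pm_pair:
  assumes "sets M = sets (pm_space I)" "x \<in> I" "y \<in> I"
  shows "(\<lambda>\<omega>. (\<omega> x, \<omega> y)) \<in> measurable M (count_space ({-1,1::int} \<times> {-1,1::int}))"
proof -
  have "(\<lambda>\<omega>. (\<omega> x, \<omega> y)) \<in> measurable M (count_space {-1,1::int} \<Otimes>\<^sub>M count_space {-1,1::int})"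
    using measurable_pm_component[OF assms(1)] assms(2,3) by (intro measurable_Pair)
  thus ?thesis by (simp add: pair_measure_countable)
qed

lemma measurable_bunch_restrict:
  assumes "sets M = sets (pm_space (Sigma Bs cmp))" "b \<in> Bs"
  shows "(\<lambda>\<omega>. \<lambda>c\<in>cmp b. \<omega> (b, c)) \<in> measurable M (pm_space (cmp b))"
  unfolding pm_space_def
  by (rule measurable_restrict) (use measurable_pm_component[OF assms(1)] assms(2) in auto)

lemma
  assumes "\<And>i. i \<in> I \<Longrightarrow> prob_space (M i)" "J \<subseteq> I" "finite J"
    and "\<And>i. i \<in> J \<Longrightarrow> X i \<in> sets (M i)"
  shows sets_PiM_cylinder: "{\<omega>\<in>space (PiM I M). \<forall>i\<in>J. \<omega> i \<in> X i} \<in> sets (PiM I M)"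
    and emeasure_PiM_cylinder:
      "emeasure (PiM I M) {\<omega>\<in>space (PiM I M). \<forall>i\<in>J. \<omega> i \<in> X i} = (\<Prod>i\<in>J. emeasure (M i) (X i))"
proof -
  have eq: "{\<omega>\<in>space (PiM I M). \<forall>i\<in>J. \<omega> i \<in> X i} = prod_emb I M J (PiE J X)"
    unfolding prod_emb_def using assms(2) by (auto simp: space_PiM PiE_iff extensional_def)
  show "{\<omega>\<in>space (PiM I M). \<forall>i\<in>J. \<omega> i \<in> X i} \<in> sets (PiM I M)"
    unfolding eq using assms by (intro sets_PiM_I) auto
  show "emeasure (PiM I M) {\<omega>\<in>space (PiM I M). \<forall>i\<in>J. \<omega> i \<in> X i} = (\<Prod>i\<in>J. emeasure (M i) (X i))"
    unfolding eq by (rule emeasure_PiM_emb) (use assms in auto)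
qed

lemma closed_sum_eq: "closed {q::'a \<Rightarrow> real. sum q U = c}"
  by (intro closed_Collect_eq continuous_on_sum) (auto intro: continuous_intros)

lemma compact_PiE_unit_interval: "compact (PiE V (\<lambda>_. {0..1::real}))"
proof -
  have box: "PiE V (\<lambda>_. {0..1::real}) = PiE UNIV (\<lambda>v. if v \<in> V then {0..1} else {undefined})"
    by (auto simp: PiE_iff extensional_def split: if_splits)
  have "compactin (product_topology (\<lambda>_. euclidean) UNIV)
      (PiE UNIV (\<lambda>v. if v \<in> V then {0..1::real} else {undefined}))"
    by (subst compactin_PiE) auto
  thus ?thesis unfolding box euclidean_product_topology by simp
qed

subsection \<open>Couplings of a binary system\<close>

lemma
  assumes "is_coupling Bs cmp P S"
  shows is_coupling_prob_space: "prob_space S"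
    and sets_is_coupling: "sets S = sets (pm_space (Sigma Bs cmp))"
    and space_is_coupling: "space S = PiE (Sigma Bs cmp) (\<lambda>_. {-1,1})"
    and is_coupling_bunch:
      "b \<in> Bs \<Longrightarrow> distr S (pm_space (cmp b)) (\<lambda>\<omega>. \<lambda>c\<in>cmp b. \<omega> (b, c)) = P b"
  using assms sets_eq_imp_space_eq[of S "pm_space (Sigma Bs cmp)"]
  by (auto simp: is_coupling_def space_pm_space)

locale bin_system =
  fixes Bs :: "'b set" and cmp :: "'b \<Rightarrow> 'c set"
    and P :: "'b \<Rightarrow> ('c \<Rightarrow> int) measure"
    and A B :: "nat \<Rightarrow> 'b \<times> 'c" and n :: nat
  assumes prob_space_bunch: "b \<in> Bs \<Longrightarrow> prob_space (P b)"
    and sets_bunch: "b \<in> Bs \<Longrightarrow> sets (P b) = sets (pm_space (cmp b))"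
    and A_component: "i < n \<Longrightarrow> A i \<in> Sigma Bs cmp"
    and B_component: "i < n \<Longrightarrow> B i \<in> Sigma Bs cmp"
begin

lemma space_bunch: "b \<in> Bs \<Longrightarrow> space (P b) = PiE (cmp b) (\<lambda>_. {-1,1})"
  using sets_eq_imp_space_eq[OF sets_bunch] by (simp add: space_pm_space)

lemma emeasure_bunch: "b \<in> Bs \<Longrightarrow> emeasure (P b) X = ennreal (measure (P b) X)"
  using finite_measure.emeasure_eq_measure[OF prob_space.finite_measure[OF prob_space_bunch]] .

lemma
  assumes "x \<in> Sigma Bs cmp"
  shows prob_space_comp_dist: "prob_space (comp_dist P x)"
    and sets_comp_dist: "sets (comp_dist P x) = sets (count_space {-1,1::int})"
proof -
  obtain b c where x: "x = (b,c)" "b \<in> Bs" "c \<in> cmp b" using assms by auto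
  show "prob_space (comp_dist P x)" unfolding comp_dist_def x
    using prob_space.prob_space_distr[OF prob_space_bunch[OF x(2)]
        measurable_pm_component[OF sets_bunch[OF x(2)] x(3)]] by simp
  show "sets (comp_dist P x) = sets (count_space {-1,1::int})" by (simp add: comp_dist_def)
qed

lemma distr_coupling_component:
  assumes S: "is_coupling Bs cmp P S" and x: "x \<in> Sigma Bs cmp"
  shows "distr S (count_space {-1,1}) (\<lambda>\<omega>. \<omega> x) = comp_dist P x"
proof -
  obtain b c where x: "x = (b,c)" "b \<in> Bs" "c \<in> cmp b" using x by auto
  have "comp_dist P x = distr (distr S (pm_space (cmp b)) (\<lambda>\<omega>. \<lambda>c\<in>cmp b. \<omega> (b, c)))
          (count_space {-1,1}) (\<lambda>\<omega>. \<omega> c)"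
    using is_coupling_bunch[OF S x(2)] by (simp add: comp_dist_def x)
  also have "\<dots> = distr S (count_space {-1,1}) ((\<lambda>\<omega>. \<omega> c) \<circ> (\<lambda>\<omega>. \<lambda>c\<in>cmp b. \<omega> (b, c)))"
    using measurable_bunch_restrict[OF sets_is_coupling[OF S] x(2)] x(3)
    by (intro distr_distr measurable_pm_component) auto
  also have "(\<lambda>\<omega>. \<omega> c) \<circ> (\<lambda>\<omega>. \<lambda>c\<in>cmp b. \<omega> (b, c)) = (\<lambda>\<omega>. \<omega> x)"
    using x by auto
  finally show ?thesis by simp
qed

lemma pair_coupling_pair_dist:
  assumes S: "is_coupling Bs cmp P S" and x: "x \<in> Sigma Bs cmp" and y: "y \<in> Sigma Bs cmp"
  shows "pair_coupling (comp_dist P x) (comp_dist P y) (pair_dist S x y)"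
proof -
  note pm = measurable_pm_pair[OF sets_is_coupling[OF S] x y]
  have "distr (pair_dist S x y) (count_space {-1,1}) fst = comp_dist P x"
    unfolding pair_dist_def using distr_coupling_component[OF S x]
    by (subst distr_distr[OF _ pm]) (auto simp: comp_def)
  moreover have "distr (pair_dist S x y) (count_space {-1,1}) snd = comp_dist P y"
    unfolding pair_dist_def using distr_coupling_component[OF S y]
    by (subst distr_distr[OF _ pm]) (auto simp: comp_def)
  ultimately show ?thesis
    unfolding pair_coupling_def
    using prob_space.prob_space_distr[OF is_coupling_prob_space[OF S] pm]
    by (simp add: pair_dist_def)
qed

lemma pair_dist_mismatch:
  assumes S: "is_coupling Bs cmp P S" and x: "x \<in> Sigma Bs cmp" and y: "y \<in> Sigma Bs cmp"
  shows "measure (pair_dist S x y) {p \<in> space (pair_dist S x y). fst p \<noteq> snd p}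
       = measure S {\<omega> \<in> space S. \<omega> x \<noteq> \<omega> y}"
proof -
  note pm = measurable_pm_pair[OF sets_is_coupling[OF S] x y]
  have "measure (pair_dist S x y) {p \<in> space (pair_dist S x y). fst p \<noteq> snd p}
      = measure S ((\<lambda>\<omega>. (\<omega> x, \<omega> y)) -` {p \<in> space (pair_dist S x y). fst p \<noteq> snd p} \<inter> space S)"
    unfolding pair_dist_def by (rule measure_distr[OF pm]) auto
  also have "(\<lambda>\<omega>. (\<omega> x, \<omega> y)) -` {p \<in> space (pair_dist S x y). fst p \<noteq> snd p} \<inter> space S
      = {\<omega> \<in> space S. \<omega> x \<noteq> \<omega> y}"
    using x y by (auto simp: pair_dist_def space_is_coupling[OF S])
  finally show ?thesis .
qed

lemma comp_expect_eq:
  assumes x: "x \<in> Sigma Bs cmp"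
  shows "comp_expect P x = 2 * measure (comp_dist P x) {1} - 1"
proof -
  obtain b c where x: "x = (b,c)" "b \<in> Bs" "c \<in> cmp b" using x by auto
  interpret Pb: prob_space "P b" by (rule prob_space_bunch[OF x(2)])
  define E where "E = {\<omega>\<in>space (P b). \<omega> c = 1}"
  have mc: "(\<lambda>\<omega>. \<omega> c) \<in> measurable (P b) (count_space {-1,1::int})"
    by (rule measurable_pm_component[OF sets_bunch[OF x(2)] x(3)])
  have E: "E \<in> sets (P b)"
    using measurable_sets[OF mc, of "{1}"] by (simp add: E_def vimage_def Int_def conj_commute)
  have "comp_expect P x = (\<integral>\<omega>. 2 * indicator E \<omega> - 1 \<partial>P b)"
    unfolding comp_expect_def x fst_conv snd_conv
  proof (intro Bochner_Integration.integral_cong refl)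
    fix \<omega> assume "\<omega> \<in> space (P b)"
    moreover from this have "\<omega> c \<in> {-1,1}" using space_bunch[OF x(2)] x(3) by auto
    ultimately show "real_of_int (\<omega> c) = 2 * indicator E \<omega> - 1"
      by (auto simp: E_def indicator_def)
  qed
  also have "\<dots> = 2 * measure (P b) E - 1"
    using E by (subst Bochner_Integration.integral_diff) (auto simp: Pb.emeasure_eq_measure Pb.prob_space)
  also have "measure (P b) E = measure (comp_dist P x) {1}"
    unfolding comp_dist_def x using measure_distr[OF mc, of "{1}"]
    by (simp add: E_def vimage_def Int_def conj_commute)
  finally show ?thesis .
qed

subsection \<open>Reduction to the components in connections\<close>

definition "K = A ` {..<n} \<union> B ` {..<n}"
definition "V = PiE K (\<lambda>_. {-1,1::int})"
definition "K_of b = {c. (b,c) \<in> K}"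
definition "bunch_part b v = (\<lambda>c\<in>K_of b. v (b,c))"
definition "cyl b w = {\<omega>\<in>space (P b). \<forall>c\<in>K_of b. \<omega> c = w c}"
definition "cyl_prob b v = measure (P b) (cyl b (bunch_part b v))"
definition "K_bunches = fst ` K"
definition "indep_prob v = (\<Prod>b\<in>K_bunches. cyl_prob b v)"
definition "consistent = {q \<in> PiE V (\<lambda>_. {0..1::real}). sum q V = 1 \<and>
   (\<forall>b\<in>Bs. \<forall>v0\<in>V. sum q {v\<in>V. bunch_part b v = bunch_part b v0} = cyl_prob b v0)}"
definition "cost q = (\<Sum>i<n. sum q {v\<in>V. v (A i) \<noteq> v (B i)})"
definition "assign_dist S = (\<lambda>v\<in>V. measure S {\<omega>\<in>space S. restrict \<omega> K = v})"

lemma finite_K: "finite K" by (simp add: K_def)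
lemma K_subset: "K \<subseteq> Sigma Bs cmp" unfolding K_def using A_component B_component by blast
lemma connection_in_K: "i < n \<Longrightarrow> A i \<in> K" "i < n \<Longrightarrow> B i \<in> K" by (auto simp: K_def)
lemma finite_V: "finite V" by (simp add: V_def finite_K finite_PiE)
lemma K_bunches_subset: "K_bunches \<subseteq> Bs" using K_subset by (auto simp: K_bunches_def)
lemma finite_K_bunches: "finite K_bunches" by (simp add: K_bunches_def finite_K)
lemma K_of_subset: "K_of b \<subseteq> cmp b" using K_subset by (auto simp: K_of_def)

lemma finite_K_of: "finite (K_of b)"
proof -
  have "K_of b = snd ` (K \<inter> {b} \<times> UNIV)" by (force simp: K_of_def)
  thus ?thesis using finite_K by simp
qed

lemma K_of_empty: "b \<notin> K_bunches \<Longrightarrow> K_of b = {}"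
  by (force simp: K_of_def K_bunches_def)

lemma cyl_sets: assumes "b \<in> Bs" shows "cyl b w \<in> sets (P b)"
proof -
  have "cyl b w = {\<omega>\<in>space (pm_space (cmp b)). \<forall>c\<in>K_of b. \<omega> c = w c}"
    unfolding cyl_def using sets_eq_imp_space_eq[OF sets_bunch[OF assms]] by simp
  also have "\<dots> \<in> sets (pm_space (cmp b))" by (rule pm_space_cylinder_sets[OF finite_K_of K_of_subset])
  finally show ?thesis using sets_bunch[OF assms] by simp
qed

lemma cyl_prob_nonneg: "0 \<le> cyl_prob b v" by (simp add: cyl_prob_def)
lemma indep_prob_nonneg: "0 \<le> indep_prob v" by (simp add: indep_prob_def prod_nonneg cyl_prob_nonneg)

lemma indep_prob_split:
  assumes b: "b \<in> Bs" shows "indep_prob v = cyl_prob b v * (\<Prod>b'\<in>K_bunches-{b}. cyl_prob b' v)"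
proof (cases "b \<in> K_bunches")
  case True thus ?thesis unfolding indep_prob_def using finite_K_bunches by (simp add: prod.remove)
next
  case False
  have "cyl_prob b v = 1"
    using prob_space.prob_space[OF prob_space_bunch[OF b]] K_of_empty[OF False]
    by (simp add: cyl_prob_def cyl_def)
  thus ?thesis using False by (simp add: indep_prob_def)
qed

lemma restrict_K_eq_iff: "v \<in> V \<Longrightarrow> restrict \<omega> K = v \<longleftrightarrow> (\<forall>k\<in>K. \<omega> k = v k)"
  by (auto simp: V_def PiE_iff extensional_def fun_eq_iff)

lemma bunch_part_eq_iff: "bunch_part b u = bunch_part b v \<longleftrightarrow> (\<forall>c\<in>K_of b. u (b,c) = v (b,c))"
  by (auto simp: bunch_part_def fun_eq_iff restrict_def)

lemma consistent_nonneg: "q \<in> consistent \<Longrightarrow> v \<in> V \<Longrightarrow> 0 \<le> q v"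
  by (auto simp: consistent_def PiE_iff)

lemma restrict_K_in_V:
  assumes "is_coupling Bs cmp P S" "\<omega> \<in> space S" shows "restrict \<omega> K \<in> V"
  using assms space_is_coupling[OF assms(1)] K_subset by (auto simp: V_def PiE_iff)

lemma assign_event_sets:
  assumes S: "is_coupling Bs cmp P S" and v: "v \<in> V"
  shows "{\<omega>\<in>space S. restrict \<omega> K = v} \<in> sets S"
proof -
  note sS = sets_is_coupling[OF S]
  have "{\<omega>\<in>space S. restrict \<omega> K = v} = {\<omega>\<in>space (pm_space (Sigma Bs cmp)). \<forall>k\<in>K. \<omega> k = v k}"
    using sets_eq_imp_space_eq[OF sS] restrict_K_eq_iff[OF v] by simp
  also have "\<dots> \<in> sets (pm_space (Sigma Bs cmp))" by (rule pm_space_cylinder_sets[OF finite_K K_subset])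
  finally show ?thesis using sS by simp
qed

lemma sum_assign_dist:
  assumes S: "is_coupling Bs cmp P S" and U: "U \<subseteq> V"
  shows "sum (assign_dist S) U = measure S {\<omega>\<in>space S. restrict \<omega> K \<in> U}"
proof -
  interpret S: prob_space S by (rule is_coupling_prob_space[OF S])
  have "{\<omega>\<in>space S. restrict \<omega> K \<in> U} = (\<Union>v\<in>U. {\<omega>\<in>space S. restrict \<omega> K = v})" by auto
  moreover have "measure S (\<Union>v\<in>U. {\<omega>\<in>space S. restrict \<omega> K = v})
      = (\<Sum>v\<in>U. measure S {\<omega>\<in>space S. restrict \<omega> K = v})"
    using finite_V U assign_event_sets[OF S]
    by (intro measure_finite_Union) (auto simp: disjoint_family_on_def dest: finite_subset)
  moreover have "sum (assign_dist S) U = (\<Sum>v\<in>U. measure S {\<omega>\<in>space S. restrict \<omega> K = v})"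
    using U by (intro sum.cong) (auto simp: assign_dist_def)
  ultimately show ?thesis by simp
qed

lemma assign_dist_bunch_part:
  assumes S: "is_coupling Bs cmp P S" and b: "b \<in> Bs" and v0: "v0 \<in> V"
  shows "sum (assign_dist S) {v\<in>V. bunch_part b v = bunch_part b v0} = cyl_prob b v0"
proof -
  let ?pr = "\<lambda>\<omega>. \<lambda>c\<in>cmp b. \<omega> (b, c)"
  have "{\<omega>\<in>space S. restrict \<omega> K \<in> {v\<in>V. bunch_part b v = bunch_part b v0}}
      = ?pr -` cyl b (bunch_part b v0) \<inter> space S"
  proof -
    have "restrict \<omega> K \<in> {v\<in>V. bunch_part b v = bunch_part b v0} \<longleftrightarrow> ?pr \<omega> \<in> cyl b (bunch_part b v0)"
      if w: "\<omega> \<in> space S" for \<omega>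
    proof -
      have "?pr \<omega> \<in> space (P b)" using w b space_is_coupling[OF S] space_bunch[OF b] by auto
      moreover have "\<forall>c\<in>K_of b. (b,c) \<in> K \<and> c \<in> cmp b \<and> bunch_part b v0 c = v0 (b,c)"
        using K_of_subset by (auto simp: K_of_def bunch_part_def)
      ultimately show ?thesis using restrict_K_in_V[OF S w]
        by (auto simp: bunch_part_eq_iff cyl_def)
    qed
    thus ?thesis by auto
  qed
  moreover have "measure S (?pr -` cyl b (bunch_part b v0) \<inter> space S)
      = measure (distr S (pm_space (cmp b)) ?pr) (cyl b (bunch_part b v0))"
    using cyl_sets[OF b] sets_bunch[OF b]
    by (intro measure_distr[symmetric] measurable_bunch_restrict[OF sets_is_coupling[OF S] b]) auto
  ultimately show ?thesis
    using sum_assign_dist[OF S] is_coupling_bunch[OF S b] by (simp add: cyl_prob_def)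
qed

lemma assign_dist_consistent:
  assumes S: "is_coupling Bs cmp P S"
  shows "assign_dist S \<in> consistent"
proof -
  have "sum (assign_dist S) V = 1"
  proof -
    have "{\<omega>\<in>space S. restrict \<omega> K \<in> V} = space S" using restrict_K_in_V[OF S] by auto
    thus ?thesis
      using sum_assign_dist[OF S] prob_space.prob_space[OF is_coupling_prob_space[OF S]] by simp
  qed
  moreover have "assign_dist S \<in> PiE V (\<lambda>_. {0..1::real})"
    using prob_space.prob_le_1[OF is_coupling_prob_space[OF S]] by (auto simp: assign_dist_def)
  ultimately show ?thesis using assign_dist_bunch_part[OF S] by (auto simp: consistent_def)
qed

lemma mismatch_eq_cost:
  assumes S: "is_coupling Bs cmp P S"
  shows "mismatch S A B n = cost (assign_dist S)"
proof -
  have "measure S {\<omega>\<in>space S. \<omega> (A i) \<noteq> \<omega> (B i)} = sum (assign_dist S) {v\<in>V. v (A i) \<noteq> v (B i)}"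
    if i: "i < n" for i
  proof -
    have "{\<omega>\<in>space S. \<omega> (A i) \<noteq> \<omega> (B i)} = {\<omega>\<in>space S. restrict \<omega> K \<in> {v\<in>V. v (A i) \<noteq> v (B i)}}"
      using restrict_K_in_V[OF S] connection_in_K[OF i] by auto
    thus ?thesis using sum_assign_dist[OF S] by simp
  qed
  thus ?thesis by (simp add: mismatch_def cost_def)
qed

subsection \<open>Realizing a consistent distribution by a coupling\<close>

abbreviation "indep \<equiv> PiM Bs P"
abbreviation "joint \<equiv> pm_space (Sigma Bs cmp)"

definition "assign \<omega> = (\<lambda>k\<in>K. \<omega> (fst k) (snd k))"
definition "flatten \<omega> = (\<lambda>x\<in>Sigma Bs cmp. \<omega> (fst x) (snd x))"
definition "assign_event v = {\<omega>\<in>space indep. assign \<omega> = v}"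

text \<open>Where indep_prob v = 0 the factor is 0 by division by zero; this is harmless because a
consistent q vanishes there as well (consistent_vanishes).\<close>
definition "reweight q \<omega> = (\<Sum>v\<in>V. ennreal (q v / indep_prob v) * indicator (assign_event v) \<omega>)"

lemma prob_space_indep: "prob_space indep"
  by (rule prob_space_PiM) (use prob_space_bunch in auto)

lemma space_indep: "space indep = PiE Bs (\<lambda>b. space (P b))" by (simp add: space_PiM)

lemma restrict_flatten: "restrict (flatten \<omega>) K = assign \<omega>"
  using K_subset by (auto simp: assign_def flatten_def fun_eq_iff)

lemma measurable_flatten: "flatten \<in> measurable indep joint"
proof -
  have "(\<lambda>\<omega>. \<omega> (fst x) (snd x)) \<in> measurable indep (count_space {-1,1::int})"
    if x: "x \<in> Sigma Bs cmp" for x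
  proof -
    have "(\<lambda>\<omega>. \<omega> (fst x)) \<in> measurable indep (P (fst x))"
      using x by (intro measurable_component_singleton) auto
    moreover have "(\<lambda>f. f (snd x)) \<in> measurable (P (fst x)) (count_space {-1,1::int})"
      using x by (intro measurable_pm_component[OF sets_bunch]) auto
    ultimately show ?thesis by (rule measurable_compose)
  qed
  thus ?thesis unfolding flatten_def pm_space_def by (rule measurable_restrict)
qed

lemma measurable_indep_bunch:
  "b \<in> Bs \<Longrightarrow> sets M = sets indep \<Longrightarrow> (\<lambda>\<omega>. \<omega> b) \<in> measurable M (pm_space (cmp b))"
  using measurable_component_singleton[of b Bs P]
  by (simp add: measurable_cong_sets[OF _ sets_bunch] measurable_cong_sets[of M indep])

lemma sets_indep_bunch_event:
  assumes b: "b \<in> Bs" and E: "E \<in> sets (P b)"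
  shows "{\<omega>\<in>space indep. \<omega> b \<in> E} \<in> sets indep"
  using measurable_sets[OF measurable_component_singleton[of b Bs P] E] b
  by (simp add: vimage_def Int_def conj_commute)

lemma distr_flatten_bunch:
  assumes b: "b \<in> Bs" and sM: "sets M = sets indep"
  shows "distr (distr M joint flatten) (pm_space (cmp b)) (\<lambda>\<omega>. \<lambda>c\<in>cmp b. \<omega> (b, c))
         = distr M (pm_space (cmp b)) (\<lambda>\<omega>. \<omega> b)"
proof -
  have fm: "flatten \<in> measurable M joint"
    unfolding measurable_cong_sets[OF sM refl] by (rule measurable_flatten)
  have "distr (distr M joint flatten) (pm_space (cmp b)) (\<lambda>\<omega>. \<lambda>c\<in>cmp b. \<omega> (b, c))
       = distr M (pm_space (cmp b)) ((\<lambda>\<omega>. \<lambda>c\<in>cmp b. \<omega> (b, c)) \<circ> flatten)"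
    by (rule distr_distr[OF measurable_bunch_restrict[OF refl b] fm])
  also have "\<dots> = distr M (pm_space (cmp b)) (\<lambda>\<omega>. \<omega> b)"
  proof (rule distr_cong[OF refl refl])
    fix \<omega> assume "\<omega> \<in> space M"
    hence "\<omega> b \<in> PiE (cmp b) (\<lambda>_. {-1,1})"
      using b space_bunch[OF b] sets_eq_imp_space_eq[OF sM] by (auto simp: space_indep)
    thus "((\<lambda>\<omega>. \<lambda>c\<in>cmp b. \<omega> (b, c)) \<circ> flatten) \<omega> = \<omega> b"
      using b by (auto simp: flatten_def fun_eq_iff PiE_iff extensional_def)
  qed
  finally show ?thesis .
qed

lemma is_coupling_distr_flatten:
  assumes "prob_space M" "sets M = sets indep"
    and "\<And>b. b \<in> Bs \<Longrightarrow> distr M (pm_space (cmp b)) (\<lambda>\<omega>. \<omega> b) = P b"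
  shows "is_coupling Bs cmp P (distr M joint flatten)"
  unfolding is_coupling_def
proof (intro conjI ballI)
  show "prob_space (distr M joint flatten)"
    using prob_space.prob_space_distr[OF assms(1)] measurable_flatten
    by (simp add: measurable_cong_sets[OF assms(2) refl])
  fix b assume "b \<in> Bs"
  thus "distr (distr M joint flatten) (pm_space (cmp b)) (\<lambda>\<omega>. \<lambda>c\<in>cmp b. \<omega> (b, c)) = P b"
    using distr_flatten_bunch[OF _ assms(2)] assms(3) by simp
qed simp

lemma is_coupling_indep: "is_coupling Bs cmp P (distr indep joint flatten)"
proof (rule is_coupling_distr_flatten[OF prob_space_indep refl])
  fix b assume b: "b \<in> Bs"
  have "distr indep (pm_space (cmp b)) (\<lambda>\<omega>. \<omega> b) = distr indep (P b) (\<lambda>\<omega>. \<omega> b)"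
    by (rule distr_cong) (use sets_bunch[OF b] in auto)
  also have "\<dots> = P b" by (rule distr_PiM_component) (use prob_space_bunch b in auto)
  finally show "distr indep (pm_space (cmp b)) (\<lambda>\<omega>. \<omega> b) = P b" .
qed

lemma assign_eq_iff_cyl:
  assumes w: "\<omega> \<in> space indep" and v: "v \<in> V"
  shows "assign \<omega> = v \<longleftrightarrow> (\<forall>b\<in>K_bunches. \<omega> b \<in> cyl b (bunch_part b v))"
proof -
  have "assign \<omega> = v \<longleftrightarrow> (\<forall>k\<in>K. \<omega> (fst k) (snd k) = v k)"
    using v by (auto simp: assign_def V_def PiE_iff extensional_def fun_eq_iff)
  also have "\<dots> \<longleftrightarrow> (\<forall>b\<in>K_bunches. \<omega> b \<in> cyl b (bunch_part b v))"
  proof -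
    have "\<omega> b \<in> space (P b)" if "b \<in> K_bunches" for b
      using that w K_bunches_subset by (auto simp: space_indep)
    thus ?thesis by (force simp: cyl_def bunch_part_def K_of_def K_bunches_def)
  qed
  finally show ?thesis .
qed

lemma
  assumes v: "v \<in> V"
  shows sets_assign_event: "assign_event v \<in> sets indep"
    and emeasure_assign_event: "emeasure indep (assign_event v) = ennreal (indep_prob v)"
proof -
  have eq: "assign_event v = {\<omega>\<in>space indep. \<forall>b\<in>K_bunches. \<omega> b \<in> cyl b (bunch_part b v)}"
    using assign_eq_iff_cyl[OF _ v] by (auto simp: assign_event_def)
  show "assign_event v \<in> sets indep" unfolding eq
    using cyl_sets K_bunches_subset finite_K_bunches prob_space_bunch
    by (intro sets_PiM_cylinder) auto
  have "emeasure indep (assign_event v) = (\<Prod>b\<in>K_bunches. emeasure (P b) (cyl b (bunch_part b v)))"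
    unfolding eq using cyl_sets K_bunches_subset finite_K_bunches prob_space_bunch
    by (intro emeasure_PiM_cylinder) auto
  also have "\<dots> = (\<Prod>b\<in>K_bunches. ennreal (cyl_prob b v))"
    using K_bunches_subset by (intro prod.cong refl) (auto simp: emeasure_bunch cyl_prob_def)
  finally show "emeasure indep (assign_event v) = ennreal (indep_prob v)"
    by (simp add: indep_prob_def prod_ennreal cyl_prob_nonneg)
qed

lemma emeasure_bunch_event_Int_assign_event:
  assumes b: "b \<in> Bs" and E: "E \<in> sets (P b)" and v: "v \<in> V"
  shows "emeasure indep ({\<omega>\<in>space indep. \<omega> b \<in> E} \<inter> assign_event v) =
       ennreal (measure (P b) (E \<inter> cyl b (bunch_part b v)) * (\<Prod>b'\<in>K_bunches-{b}. cyl_prob b' v))"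
proof -
  define X where "X b' = (if b' = b then E \<inter> cyl b (bunch_part b v) else cyl b' (bunch_part b' v))"
    for b'
  have J: "insert b K_bunches \<subseteq> Bs" "finite (insert b K_bunches)"
    using b K_bunches_subset finite_K_bunches by auto
  have X: "X b' \<in> sets (P b')" if "b' \<in> insert b K_bunches" for b'
    using that J cyl_sets E by (auto simp: X_def)
  have eq: "{\<omega>\<in>space indep. \<omega> b \<in> E} \<inter> assign_event v
      = {\<omega>\<in>space indep. \<forall>b'\<in>insert b K_bunches. \<omega> b' \<in> X b'}"
  proof -
    have "(\<omega> b \<in> E \<and> assign \<omega> = v) \<longleftrightarrow> (\<forall>b'\<in>insert b K_bunches. \<omega> b' \<in> X b')"
      if w: "\<omega> \<in> space indep" for \<omega>
    proof (cases "b \<in> K_bunches")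
      case True
      thus ?thesis using assign_eq_iff_cyl[OF w v] by (auto simp: X_def)
    next
      case False
      have "\<omega> b \<in> cyl b (bunch_part b v)"
        using w b K_of_empty[OF False] by (auto simp: space_indep cyl_def)
      thus ?thesis using assign_eq_iff_cyl[OF w v] False by (auto simp: X_def)
    qed
    thus ?thesis by (auto simp: assign_event_def)
  qed
  have "emeasure indep ({\<omega>\<in>space indep. \<omega> b \<in> E} \<inter> assign_event v)
      = (\<Prod>b'\<in>insert b K_bunches. emeasure (P b') (X b'))"
    unfolding eq using J X prob_space_bunch by (intro emeasure_PiM_cylinder) auto
  also have "\<dots> = emeasure (P b) (X b) * (\<Prod>b'\<in>K_bunches - {b}. emeasure (P b') (X b'))"
    using finite_K_bunches by (rule prod.insert_remove)
  also have "\<dots> = ennreal (measure (P b) (E \<inter> cyl b (bunch_part b v)))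
      * (\<Prod>b'\<in>K_bunches - {b}. ennreal (cyl_prob b' v))"
    using b K_bunches_subset
    by (intro arg_cong2[where f="(*)"] prod.cong refl) (auto simp: X_def emeasure_bunch cyl_prob_def)
  finally show ?thesis
    by (simp add: prod_ennreal cyl_prob_nonneg ennreal_mult prod_nonneg)
qed

lemma consistent_vanishes:
  assumes q: "q \<in> consistent" and v: "v \<in> V" and d: "indep_prob v = 0"
  shows "q v = 0"
proof -
  obtain b where b: "b \<in> K_bunches" "cyl_prob b v = 0"
    using d finite_K_bunches by (auto simp: indep_prob_def)
  have "sum q {v'\<in>V. bunch_part b v' = bunch_part b v} = 0"
    using q K_bunches_subset v b by (auto simp: consistent_def)
  hence "\<forall>v'\<in>{v'\<in>V. bunch_part b v' = bunch_part b v}. q v' = 0"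
    using finite_V consistent_nonneg[OF q] by (subst (asm) sum_nonneg_eq_0_iff) auto
  thus ?thesis using v by auto
qed

lemma consistent_div_mult:
  assumes q: "q \<in> consistent" and v: "v \<in> V"
  shows "ennreal (q v / indep_prob v) * ennreal (indep_prob v) = ennreal (q v)"
proof (cases "indep_prob v = 0")
  case True thus ?thesis using consistent_vanishes[OF q v] by simp
next
  case False
  have "ennreal (q v / indep_prob v * indep_prob v) = ennreal (q v / indep_prob v) * ennreal (indep_prob v)"
    by (rule ennreal_mult) (use consistent_nonneg[OF q v] indep_prob_nonneg[of v] in auto)
  thus ?thesis using False by simp
qed

lemma measurable_reweight: "reweight q \<in> borel_measurable indep"
  unfolding reweight_def
  by (intro borel_measurable_sum borel_measurable_times_ennreal borel_measurable_const
        borel_measurable_indicator sets_assign_event)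

lemma nn_integral_reweight_indicator:
  assumes X: "X \<in> sets indep"
  shows "(\<integral>\<^sup>+\<omega>. reweight q \<omega> * indicator X \<omega> \<partial>indep)
       = (\<Sum>v\<in>V. ennreal (q v / indep_prob v) * emeasure indep (assign_event v \<inter> X))"
proof -
  have "(\<integral>\<^sup>+\<omega>. reweight q \<omega> * indicator X \<omega> \<partial>indep)
      = (\<integral>\<^sup>+\<omega>. (\<Sum>v\<in>V. ennreal (q v / indep_prob v) * indicator (assign_event v \<inter> X) \<omega>) \<partial>indep)"
    unfolding reweight_def by (simp add: sum_distrib_right indicator_inter_arith mult.assoc)
  also have "\<dots> = (\<Sum>v\<in>V. (\<integral>\<^sup>+\<omega>. ennreal (q v / indep_prob v) * indicator (assign_event v \<inter> X) \<omega> \<partial>indep))"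
    by (rule nn_integral_sum) (use sets_assign_event X in auto)
  also have "\<dots> = (\<Sum>v\<in>V. ennreal (q v / indep_prob v) * emeasure indep (assign_event v \<inter> X))"
    by (intro sum.cong refl nn_integral_cmult_indicator) (use sets_assign_event X in auto)
  finally show ?thesis .
qed

lemma measure_eq_sum_cyl:
  assumes b: "b \<in> Bs" and E: "E \<in> sets (P b)"
  shows "measure (P b) E = (\<Sum>w\<in>bunch_part b ` V. measure (P b) (E \<inter> cyl b w))"
proof -
  interpret Pb: prob_space "P b" by (rule prob_space_bunch[OF b])
  have "E \<subseteq> (\<Union>w\<in>bunch_part b ` V. cyl b w)"
  proof
    fix \<omega> assume w: "\<omega> \<in> E"
    hence ws: "\<omega> \<in> space (P b)" using sets.sets_into_space[OF E] by auto
    define v where "v = (\<lambda>k\<in>K. if fst k = b then \<omega> (snd k) else 1)"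
    have "\<omega> (snd k) \<in> {-1,1}" if "k \<in> K" "fst k = b" for k
      using that K_of_subset[of b] ws space_bunch[OF b] by (force simp: K_of_def)
    hence "v \<in> V" by (auto simp: v_def V_def PiE_iff)
    moreover have "\<omega> \<in> cyl b (bunch_part b v)"
      using ws by (auto simp: cyl_def bunch_part_def v_def K_of_def)
    ultimately show "\<omega> \<in> (\<Union>w\<in>bunch_part b ` V. cyl b w)" by auto
  qed
  hence "E = (\<Union>w\<in>bunch_part b ` V. E \<inter> cyl b w)" by auto
  moreover have "measure (P b) (\<Union>w\<in>bunch_part b ` V. E \<inter> cyl b w)
      = (\<Sum>w\<in>bunch_part b ` V. measure (P b) (E \<inter> cyl b w))"
  proof (rule measure_finite_Union)
    show "disjoint_family_on (\<lambda>w. E \<inter> cyl b w) (bunch_part b ` V)"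
    proof (auto simp: disjoint_family_on_def)
      fix v1 v2 \<omega> assume v: "bunch_part b v1 \<noteq> bunch_part b v2"
        "\<omega> \<in> cyl b (bunch_part b v1)" "\<omega> \<in> cyl b (bunch_part b v2)"
      obtain c where "c \<in> K_of b" "v1 (b,c) \<noteq> v2 (b,c)" using v(1) by (auto simp: bunch_part_eq_iff)
      thus False using v(2,3) by (auto simp: cyl_def bunch_part_def)
    qed
  qed (use finite_V E cyl_sets[OF b] in auto)
  ultimately show ?thesis by simp
qed

text \<open>Grouping the v by their b-part w, each group contributes its q-mass times the conditional
probability of E given cyl b w, and by consistency that mass is the probability of cyl b w.\<close>

lemma sum_reweighted_bunch_event:
  assumes q: "q \<in> consistent" and b: "b \<in> Bs" and E: "E \<in> sets (P b)"
  shows "(\<Sum>v\<in>V. q v / indep_prob v *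
            (measure (P b) (E \<inter> cyl b (bunch_part b v)) * (\<Prod>b'\<in>K_bunches-{b}. cyl_prob b' v)))
          = measure (P b) E"
proof -
  interpret Pb: prob_space "P b" by (rule prob_space_bunch[OF b])
  define h where "h w = measure (P b) (E \<inter> cyl b w) / measure (P b) (cyl b w)" for w
  have "q v / indep_prob v *
        (measure (P b) (E \<inter> cyl b (bunch_part b v)) * (\<Prod>b'\<in>K_bunches-{b}. cyl_prob b' v))
      = q v * h (bunch_part b v)" if v: "v \<in> V" for v
  proof (cases "indep_prob v = 0")
    case True thus ?thesis using consistent_vanishes[OF q v] by simp
  next
    case False
    thus ?thesis using indep_prob_split[OF b, of v] by (simp add: h_def cyl_prob_def field_simps)
  qed
  hence "(\<Sum>v\<in>V. q v / indep_prob v *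
            (measure (P b) (E \<inter> cyl b (bunch_part b v)) * (\<Prod>b'\<in>K_bunches-{b}. cyl_prob b' v)))
       = (\<Sum>v\<in>V. q v * h (bunch_part b v))" by simp
  also have "\<dots> = (\<Sum>w\<in>bunch_part b ` V. \<Sum>v\<in>{v\<in>V. bunch_part b v = w}. q v * h (bunch_part b v))"
    using finite_V by (rule sum.image_gen)
  also have "\<dots> = (\<Sum>w\<in>bunch_part b ` V. measure (P b) (E \<inter> cyl b w))"
  proof (rule sum.cong[OF refl])
    fix w assume "w \<in> bunch_part b ` V"
    then obtain v0 where v0: "v0 \<in> V" "w = bunch_part b v0" by auto
    have mass: "sum q {v\<in>V. bunch_part b v = w} = measure (P b) (cyl b w)"
      using q b v0 by (auto simp: consistent_def cyl_prob_def)
    have "measure (P b) (E \<inter> cyl b w) \<le> measure (P b) (cyl b w)"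
      using cyl_sets[OF b] by (intro Pb.finite_measure_mono) auto
    hence cond: "measure (P b) (cyl b w) * h w = measure (P b) (E \<inter> cyl b w)"
      by (cases "measure (P b) (cyl b w) = 0") (simp_all add: h_def measure_le_0_iff)
    have "(\<Sum>v\<in>{v\<in>V. bunch_part b v = w}. q v * h (bunch_part b v))
        = (\<Sum>v\<in>{v\<in>V. bunch_part b v = w}. q v * h w)" by (rule sum.cong) auto
    also have "\<dots> = sum q {v\<in>V. bunch_part b v = w} * h w" by (rule sum_distrib_right[symmetric])
    finally show "(\<Sum>v\<in>{v\<in>V. bunch_part b v = w}. q v * h (bunch_part b v)) = measure (P b) (E \<inter> cyl b w)"
      using mass cond by simp
  qed
  also have "\<dots> = measure (P b) E" by (rule measure_eq_sum_cyl[OF b E, symmetric])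
  finally show ?thesis .
qed

lemma emeasure_reweighted_bunch_event:
  assumes q: "q \<in> consistent" and b: "b \<in> Bs" and E: "E \<in> sets (P b)"
  shows "emeasure (density indep (reweight q)) {\<omega>\<in>space indep. \<omega> b \<in> E} = ennreal (measure (P b) E)"
proof -
  note ev = sets_indep_bunch_event[OF b E]
  have nonneg: "0 \<le> q v / indep_prob v *
      (measure (P b) (E \<inter> cyl b (bunch_part b v)) * (\<Prod>b'\<in>K_bunches-{b}. cyl_prob b' v))"
    if "v \<in> V" for v
    using consistent_nonneg[OF q that] indep_prob_nonneg[of v]
    by (intro mult_nonneg_nonneg divide_nonneg_nonneg prod_nonneg) (auto simp: cyl_prob_nonneg)
  have "emeasure (density indep (reweight q)) {\<omega>\<in>space indep. \<omega> b \<in> E}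
      = (\<Sum>v\<in>V. ennreal (q v / indep_prob v) * emeasure indep (assign_event v \<inter> {\<omega>\<in>space indep. \<omega> b \<in> E}))"
    using emeasure_density[OF measurable_reweight ev] nn_integral_reweight_indicator[OF ev] by simp
  also have "\<dots> = (\<Sum>v\<in>V. ennreal (q v / indep_prob v *
      (measure (P b) (E \<inter> cyl b (bunch_part b v)) * (\<Prod>b'\<in>K_bunches-{b}. cyl_prob b' v))))"
  proof (rule sum.cong[OF refl])
    fix v assume v: "v \<in> V"
    have "assign_event v \<inter> {\<omega>\<in>space indep. \<omega> b \<in> E} = {\<omega>\<in>space indep. \<omega> b \<in> E} \<inter> assign_event v"
      by auto
    thus "ennreal (q v / indep_prob v) * emeasure indep (assign_event v \<inter> {\<omega>\<in>space indep. \<omega> b \<in> E})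
        = ennreal (q v / indep_prob v *
           (measure (P b) (E \<inter> cyl b (bunch_part b v)) * (\<Prod>b'\<in>K_bunches-{b}. cyl_prob b' v)))"
      using emeasure_bunch_event_Int_assign_event[OF b E v] consistent_nonneg[OF q v]
        indep_prob_nonneg[of v]
      by (simp only:) (rule ennreal_mult[symmetric], simp_all add: prod_nonneg cyl_prob_nonneg)
  qed
  also have "\<dots> = ennreal (measure (P b) E)"
    using nonneg by (simp add: sum_ennreal sum_reweighted_bunch_event[OF q b E] del: times_divide_eq_left)
  finally show ?thesis .
qed

lemma emeasure_reweighted_assign_event:
  assumes q: "q \<in> consistent" and v0: "v0 \<in> V"
  shows "emeasure (density indep (reweight q)) (assign_event v0) = ennreal (q v0)"
proof -
  note ev = sets_assign_event[OF v0]
  have "emeasure (density indep (reweight q)) (assign_event v0)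
      = (\<Sum>v\<in>V. ennreal (q v / indep_prob v) * emeasure indep (assign_event v \<inter> assign_event v0))"
    using emeasure_density[OF measurable_reweight ev] nn_integral_reweight_indicator[OF ev] by simp
  also have "\<dots> = (\<Sum>v\<in>V. if v = v0 then ennreal (q v0) else 0)"
  proof (rule sum.cong[OF refl])
    fix v assume v: "v \<in> V"
    show "ennreal (q v / indep_prob v) * emeasure indep (assign_event v \<inter> assign_event v0)
        = (if v = v0 then ennreal (q v0) else 0)"
    proof (cases "v = v0")
      case True
      thus ?thesis using emeasure_assign_event[OF v] consistent_div_mult[OF q v] by simp
    next
      case False
      hence "assign_event v \<inter> assign_event v0 = {}" by (auto simp: assign_event_def)
      thus ?thesis using False by simp
    qed
  qed
  also have "\<dots> = ennreal (q v0)" using v0 finite_V by simp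
  finally show ?thesis .
qed

lemma prob_space_reweighted:
  assumes q: "q \<in> consistent"
  shows "prob_space (density indep (reweight q))"
proof (rule prob_spaceI)
  have "emeasure (density indep (reweight q)) (space indep)
      = (\<Sum>v\<in>V. ennreal (q v / indep_prob v) * emeasure indep (assign_event v \<inter> space indep))"
    using emeasure_density[OF measurable_reweight sets.top] nn_integral_reweight_indicator[OF sets.top]
    by simp
  also have "\<dots> = (\<Sum>v\<in>V. ennreal (q v))"
  proof (rule sum.cong[OF refl])
    fix v assume v: "v \<in> V"
    have "assign_event v \<inter> space indep = assign_event v" by (auto simp: assign_event_def)
    thus "ennreal (q v / indep_prob v) * emeasure indep (assign_event v \<inter> space indep) = ennreal (q v)"
      using emeasure_assign_event[OF v] consistent_div_mult[OF q v] by simp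
  qed
  also have "\<dots> = ennreal (sum q V)" using consistent_nonneg[OF q] by (simp add: sum_ennreal)
  finally show "emeasure (density indep (reweight q)) (space (density indep (reweight q))) = 1"
    using q by (simp add: consistent_def)
qed

definition "coupling_of q = distr (density indep (reweight q)) joint flatten"

lemma is_coupling_coupling_of:
  assumes q: "q \<in> consistent"
  shows "is_coupling Bs cmp P (coupling_of q)"
  unfolding coupling_of_def
proof (rule is_coupling_distr_flatten[OF prob_space_reweighted[OF q]])
  show sD: "sets (density indep (reweight q)) = sets indep" by simp
  fix b assume b: "b \<in> Bs"
  show "distr (density indep (reweight q)) (pm_space (cmp b)) (\<lambda>\<omega>. \<omega> b) = P b"
  proof (rule measure_eqI)
    fix E assume "E \<in> sets (distr (density indep (reweight q)) (pm_space (cmp b)) (\<lambda>\<omega>. \<omega> b))"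
    hence E: "E \<in> sets (pm_space (cmp b))" "E \<in> sets (P b)" using sets_bunch[OF b] by auto
    have "(\<lambda>\<omega>. \<omega> b) -` E \<inter> space (density indep (reweight q)) = {\<omega>\<in>space indep. \<omega> b \<in> E}"
      by auto
    thus "emeasure (distr (density indep (reweight q)) (pm_space (cmp b)) (\<lambda>\<omega>. \<omega> b)) E = emeasure (P b) E"
      using emeasure_distr[OF measurable_indep_bunch[OF b sD] E(1)]
        emeasure_reweighted_bunch_event[OF q b E(2)] emeasure_bunch[OF b] by simp
  qed (use sets_bunch[OF b] in simp)
qed

lemma assign_dist_coupling_of:
  assumes q: "q \<in> consistent"
  shows "assign_dist (coupling_of q) = q"
proof
  fix v show "assign_dist (coupling_of q) v = q v"
  proof (cases "v \<in> V")
    case False thus ?thesis using q by (auto simp: assign_dist_def consistent_def PiE_iff extensional_def)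
  next
    case v: True
    have fm: "flatten \<in> measurable (density indep (reweight q)) joint"
      using measurable_flatten by simp
    have "{\<omega>\<in>space (coupling_of q). restrict \<omega> K = v} = {\<omega>\<in>space joint. \<forall>k\<in>K. \<omega> k = v k}"
      using restrict_K_eq_iff[OF v] by (simp add: coupling_of_def)
    hence ev: "{\<omega>\<in>space (coupling_of q). restrict \<omega> K = v} \<in> sets joint"
      using pm_space_cylinder_sets[OF finite_K K_subset] by simp
    have "flatten -` {\<omega>\<in>space (coupling_of q). restrict \<omega> K = v} \<inter> space (density indep (reweight q))
        = assign_event v"
      using measurable_space[OF fm] by (auto simp: assign_event_def restrict_flatten coupling_of_def)
    hence "assign_dist (coupling_of q) v = measure (density indep (reweight q)) (assign_event v)"
      using measure_distr[OF fm ev] v by (simp add: assign_dist_def coupling_of_def)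
    thus ?thesis
      using emeasure_reweighted_assign_event[OF q v] consistent_nonneg[OF q v] by (simp add: measure_def)
  qed
qed

subsection \<open>Existence of an optimal coupling\<close>

lemma compact_consistent: "compact consistent"
proof -
  have "consistent = PiE V (\<lambda>_. {0..1::real}) \<inter> ({q. sum q V = 1} \<inter>
     (\<Inter>b\<in>Bs. \<Inter>v0\<in>V. {q. sum q {v\<in>V. bunch_part b v = bunch_part b v0} = cyl_prob b v0}))"
    by (auto simp: consistent_def)
  thus ?thesis
    by (simp only:) (intro compact_Int_closed compact_PiE_unit_interval closed_Int closed_INT ballI
        closed_sum_eq)
qed

lemma continuous_on_cost: "continuous_on consistent cost"
proof -
  have "continuous_on UNIV (\<lambda>q::('b \<times> 'c \<Rightarrow> int) \<Rightarrow> real. \<Sum>i<n. \<Sum>v | v \<in> V \<and> v (A i) \<noteq> v (B i). q v)"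
    by (intro continuous_on_sum) simp
  thus ?thesis unfolding cost_def by (rule continuous_on_subset) simp
qed

lemma optimal_coupling_exists:
  obtains S where "is_coupling Bs cmp P S"
    "\<And>S'. is_coupling Bs cmp P S' \<Longrightarrow> mismatch S A B n \<le> mismatch S' A B n"
proof -
  have "consistent \<noteq> {}" using assign_dist_consistent[OF is_coupling_indep] by auto
  then obtain q where q: "q \<in> consistent" "\<And>q'. q' \<in> consistent \<Longrightarrow> cost q \<le> cost q'"
    using continuous_attains_inf[OF compact_consistent _ continuous_on_cost] by blast
  show ?thesis
  proof (rule that[OF is_coupling_coupling_of[OF q(1)]])
    fix S' assume S': "is_coupling Bs cmp P S'"
    have "mismatch (coupling_of q) A B n = cost q"
      using mismatch_eq_cost[OF is_coupling_coupling_of[OF q(1)]] assign_dist_coupling_of[OF q(1)]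
      by simp
    also have "\<dots> \<le> cost (assign_dist S')" by (rule q(2)[OF assign_dist_consistent[OF S']])
    finally show "mismatch (coupling_of q) A B n \<le> mismatch S' A B n"
      by (simp add: mismatch_eq_cost[OF S'])
  qed
qed

subsection \<open>Mismatch and maximality of the connections\<close>

definition "gap i = \<bar>measure (comp_dist P (A i)) {1} - measure (comp_dist P (B i)) {1}\<bar>"

lemma Delta0_eq_sum_gap: "Delta0 P A B n = (\<Sum>i<n. gap i)"
proof -
  have "\<bar>comp_expect P (A i) - comp_expect P (B i)\<bar> = 2 * gap i" if "i < n" for i
  proof -
    have diff: "comp_expect P (A i) - comp_expect P (B i)
        = 2 * (measure (comp_dist P (A i)) {1} - measure (comp_dist P (B i)) {1})"
      using comp_expect_eq[OF A_component[OF that]] comp_expect_eq[OF B_component[OF that]]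
      by (simp add: algebra_simps)
    show ?thesis unfolding diff abs_mult gap_def by simp
  qed
  hence "(\<Sum>i<n. \<bar>comp_expect P (A i) - comp_expect P (B i)\<bar>) = 2 * (\<Sum>i<n. gap i)"
    by (simp add: sum_distrib_left)
  thus ?thesis by (simp add: Delta0_def)
qed

lemma gap_le_mismatch:
  assumes "is_coupling Bs cmp P S" "i < n"
  shows "gap i \<le> measure S {\<omega>\<in>space S. \<omega> (A i) \<noteq> \<omega> (B i)}"
  using marginal_gap_le_pair_mismatch[OF pair_coupling_pair_dist[OF assms(1) A_component B_component]]
    pair_dist_mismatch[OF assms(1) A_component B_component] assms(2)
  by (simp add: gap_def)

lemma maximal_pair_dist_iff:
  assumes S: "is_coupling Bs cmp P S" and i: "i < n"
  shows "maximal_coupling (comp_dist P (A i)) (comp_dist P (B i)) (pair_dist S (A i) (B i))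
       \<longleftrightarrow> measure S {\<omega>\<in>space S. \<omega> (A i) \<noteq> \<omega> (B i)} = gap i"
proof -
  note comps = A_component[OF i] B_component[OF i]
  show ?thesis
    using maximal_coupling_iff_mismatch_eq_gap[OF prob_space_comp_dist[OF comps(1)]
        sets_comp_dist[OF comps(1)] prob_space_comp_dist[OF comps(2)] sets_comp_dist[OF comps(2)]]
      pair_coupling_pair_dist[OF S comps] pair_dist_mismatch[OF S comps]
    by (simp add: gap_def)
qed

lemma Delta0_le_mismatch: "is_coupling Bs cmp P S \<Longrightarrow> Delta0 P A B n \<le> mismatch S A B n"
  unfolding Delta0_eq_sum_gap mismatch_def by (intro sum_mono gap_le_mismatch) auto

lemma mismatch_eq_Delta0_iff:
  assumes S: "is_coupling Bs cmp P S"
  shows "mismatch S A B n = Delta0 P A B n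
       \<longleftrightarrow> (\<forall>i<n. measure S {\<omega>\<in>space S. \<omega> (A i) \<noteq> \<omega> (B i)} = gap i)"
proof
  assume "mismatch S A B n = Delta0 P A B n"
  hence "(\<Sum>i<n. gap i) = (\<Sum>i<n. measure S {\<omega>\<in>space S. \<omega> (A i) \<noteq> \<omega> (B i)})"
    by (simp add: Delta0_eq_sum_gap mismatch_def)
  from sum_mono_inv[OF this gap_le_mismatch[OF S]]
  show "\<forall>i<n. measure S {\<omega>\<in>space S. \<omega> (A i) \<noteq> \<omega> (B i)} = gap i" by simp
qed (simp add: Delta0_eq_sum_gap mismatch_def)

lemma noncontextual_iff_mismatch_eq_Delta0:
  "noncontextual Bs cmp P A B n \<longleftrightarrow> (\<exists>S. is_coupling Bs cmp P S \<and> mismatch S A B n = Delta0 P A B n)"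
proof -
  have "(\<forall>i<n. maximal_coupling (comp_dist P (A i)) (comp_dist P (B i)) (pair_dist S (A i) (B i)))
      \<longleftrightarrow> mismatch S A B n = Delta0 P A B n" if S: "is_coupling Bs cmp P S" for S
    using maximal_pair_dist_iff[OF S] mismatch_eq_Delta0_iff[OF S] by simp
  thus ?thesis unfolding noncontextual_def by blast
qed

end

lemma bin_system_if_binary_system:
  assumes "binary_system Bs cmp P A B n"
  shows "bin_system Bs cmp P A B n"
proof -
  note parts = assms[unfolded binary_system_def]
  note bunches = parts[THEN conjunct1] and connections = parts[THEN conjunct2, THEN conjunct1]
  show ?thesis by (intro bin_system.intro) (simp_all add: bunches connections)
qed

theorem theorem27:
  fixes Bs :: "'b set" and cmp :: "'b \<Rightarrow> 'c set"
    and P :: "'b \<Rightarrow> ('c \<Rightarrow> int) measure"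
    and A B :: "nat \<Rightarrow> 'b \<times> 'c" and n :: nat
  assumes "binary_system Bs cmp P A B n"
  shows "(\<exists>S. is_coupling Bs cmp P S \<and> mismatch S A B n = Delta_min Bs cmp P A B n)
       \<and> Delta_min Bs cmp P A B n \<ge> Delta0 P A B n
       \<and> (noncontextual Bs cmp P A B n \<longleftrightarrow> Delta_min Bs cmp P A B n = Delta0 P A B n)"
proof -
  interpret bin_system Bs cmp P A B n
    by (rule bin_system_if_binary_system[OF assms])
  obtain S where S: "is_coupling Bs cmp P S"
      and min: "\<And>S'. is_coupling Bs cmp P S' \<Longrightarrow> mismatch S A B n \<le> mismatch S' A B n"
    using optimal_coupling_exists by blast
  have Delta_min: "Delta_min Bs cmp P A B n = mismatch S A B n"
    unfolding Delta_min_def by (rule cInf_eq_minimum) (use S min in auto)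
  have "mismatch S A B n = Delta0 P A B n"
    if "is_coupling Bs cmp P S'" "mismatch S' A B n = Delta0 P A B n" for S'
    using min[OF that(1)] that(2) Delta0_le_mismatch[OF S] by linarith
  hence "noncontextual Bs cmp P A B n \<longleftrightarrow> mismatch S A B n = Delta0 P A B n"
    unfolding noncontextual_iff_mismatch_eq_Delta0 using S by blast
  thus ?thesis using S Delta_min Delta0_le_mismatch[OF S] by (simp add: exI[of _ S])
qed

end
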